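(* Let $g\ge1$, $A=\begin{pmatrix}0&0\\1&0\end{pmatrix}$, and let $\mathcal M_A=\{X(\lambda)=\lambda^{g+1}A+\sum_{i=0}^g\lambda^iX_i\mid X_i\in\mathfrak{sl}(2)\}$ with the Poisson tensor $P_0$ described in the context. The symplectic leaves of $P_0$ have dimension $2(g+1)$. Moreover, define $H(\lambda):\mathcal M_A\to\mathbb C$ by $H(X(\lambda))=\tfrac12\mathrm{Tr}\,X(\lambda)^2$ and let $H_i$ be the coefficient of $\lambda^i$ in $H(\lambda)$. Then $H_{2g+1},\dots,H_{g+1}$ are functionally independent Casimir functions of $P_0$, and consequently the symplectic leaves of $P_0$ are the level surfaces of these Casimirs.
   Context: Tangent and cotangent spaces of $\mathcal M_A\cong\mathfrak{sl}(2)^{g+1}$ are identified with $\mathfrak{sl}(2)^{g+1}$ via the pairing $\langle(V_i),(W_i)\rangle=\sum_{i=0}^g\mathrm{Tr}(V_iW_i)$. Put $X_{g+1}:=A$ and $X_m:=0$ for $m>g+1$. The Poisson tensor $P_0$ maps a covector $(W_0,\dots,W_g)$ to the vector $(\dot X_0,\dots,\dot X_g)$ with $\dot X_i=\sum_{j=0}^{g-i}[X_{i+j+1},W_j]$. *)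

theory Defs
  imports "HOL-Analysis.Analysis" "HOL-Library.Function_Algebras"
begin

type_synonym mat2 = "complex^2^2"
type_synonym tuple = "nat \<Rightarrow> mat2"
  \<comment> \<open>(X_0,...,X_g); components with index > g are kept 0\<close>

definition Amat :: mat2 where
  "Amat = vector [vector [0, 0], vector [1, 0]]"

definition sl2 :: "mat2 set" where
  "sl2 = {M. trace M = 0}"

text \<open>The space M_A, identified with sl(2)^(g+1) (and its tangent/cotangent spaces).\<close>
definition MA :: "nat \<Rightarrow> tuple set" where
  "MA g = {X. (\<forall>i\<le>g. X i \<in> sl2) \<and> (\<forall>i>g. X i = 0)}"

definition tscale :: "complex \<Rightarrow> tuple \<Rightarrow> tuple" where
  "tscale c V = (\<lambda>i. \<chi> a b. c * V i $ a $ b)"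

definition tadd :: "tuple \<Rightarrow> tuple \<Rightarrow> tuple" where
  "tadd V W = (\<lambda>i. V i + W i)"

definition pairing :: "nat \<Rightarrow> tuple \<Rightarrow> tuple \<Rightarrow> complex" where
  "pairing g V W = (\<Sum>i\<le>g. trace (V i ** W i))"

definition commut :: "mat2 \<Rightarrow> mat2 \<Rightarrow> mat2" where
  "commut P Q = P ** Q - Q ** P"

definition Xc :: "nat \<Rightarrow> tuple \<Rightarrow> nat \<Rightarrow> mat2" where
  "Xc g X m = (if m \<le> g then X m else if m = g + 1 then Amat else 0)"

definition P0 :: "nat \<Rightarrow> tuple \<Rightarrow> tuple \<Rightarrow> tuple" where
  "P0 g X W = (\<lambda>i. if i \<le> g then (\<Sum>j\<le>g - i. commut (Xc g X (i + j + 1)) (W j)) else 0)"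

definition Hc :: "nat \<Rightarrow> nat \<Rightarrow> tuple \<Rightarrow> complex" where
  "Hc g m X = (1/2) * (\<Sum>a\<le>g+1. \<Sum>b\<le>g+1. if a + b = m then trace (Xc g X a ** Xc g X b) else 0)"

text \<open>W is the differential of F at X, identified with an element of sl(2)^(g+1) via the trace pairing.\<close>
definition is_grad :: "nat \<Rightarrow> (tuple \<Rightarrow> complex) \<Rightarrow> tuple \<Rightarrow> tuple \<Rightarrow> bool" where
  "is_grad g F X W \<longleftrightarrow> W \<in> MA g \<and>
     (\<forall>V\<in>MA g. ((\<lambda>t::complex. F (tadd X (tscale t V))) has_field_derivative pairing g W V) (at 0))"

end

theory Submission
  imports Defs
begin

(* The gradient of H_m at X is the tuple (X_{m-j})_j.  For m > g, in the i-th component of P_0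
   applied to it the terms j and m - i - 1 - j are opposite commutators, so H_{g+1}, ..., H_{2g+1}
   are Casimirs.  Write M e_j for the tuple with M in slot j and 0 elsewhere.  Because X_{g+1} = A
   has (2,1)-entry 1, the Casimir gradients, and likewise the vectors P_0(H e_j) and P_0(E e_j),
   satisfy triangular Toeplitz systems and are therefore linearly independent; together with the
   E e_j the latter form a basis of sl(2)^{g+1}.  As P_0 is skew, its image lies in the common
   annihilator R of the Casimir gradients, and R meets the span of the E e_j trivially
   (triangularity once more).  Hence the image of P_0 is exactly R, spanned by the 2(g+1) vectors
   P_0(H e_j), P_0(E e_j). *)

lemma sum_fun_apply: "(sum f A) x = (\<Sum>a\<in>A. f a x)"
  by (induct A rule: infinite_finite_induct) auto

lemma sum_product_012: "(\<Sum>k\<in>{..g}\<times>{0,1,2::nat}. f k) = (\<Sum>j\<le>(g::nat). f (j,0) + f (j,1) + f (j,2))"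
  by (simp add: sum.cartesian_product' add.assoc)

lemma if_distrib_add:
  "(if c then x + y else 0) = (if c then x else 0) + (if c then y else (0::'a::monoid_add))"
  by simp

lemma sum_if_add_eq:
  fixes F :: "nat \<Rightarrow> 'a::comm_monoid_add"
  assumes "a \<le> m"
  shows "(\<Sum>b\<le>n. if a + b = m then F b else 0) = (if m - a \<le> n then F (m - a) else 0)"
proof -
  have "(\<Sum>b\<le>n. if a + b = m then F b else 0) = (\<Sum>b\<le>n. if b = m - a then F b else 0)"
    using assms by (intro sum.cong) auto
  then show ?thesis
    by simp
qed

lemma sum_reflect_antisym_eq_0:
  fixes f :: "nat \<Rightarrow> 'a::real_vector"
  assumes "\<And>j. j \<in> {a..b} \<Longrightarrow> f (b + a - j) = - f j"
  shows "sum f {a..b} = 0"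
proof -
  have "sum f {a..b} = (\<Sum>j=a..b. - f j)"
    by (subst sum.atLeastAtMost_rev) (auto intro: sum.cong simp: assms)
  then have "2 *\<^sub>R sum f {a..b} = 0"
    by (simp add: sum_negf scaleR_2 eq_neg_iff_add_eq_0[symmetric])
  then show ?thesis
    by simp
qed

lemma toeplitz_triangular_eq_0:
  fixes x d :: "nat \<Rightarrow> 'a::idom"
  assumes diag: "x (g + 1) \<noteq> 0" and above: "\<And>n. g + 1 < n \<Longrightarrow> x n = 0"
    and eqs: "\<And>i. i \<le> g \<Longrightarrow> (\<Sum>j\<le>g. d j * x (i + j + 1)) = 0"
  shows "n \<le> g \<Longrightarrow> d n = 0"
proof (induction n rule: less_induct)
  case (less n)
  have off_diag: "d j * x (g - n + j + 1) = 0" if "j \<in> {..g} - {n}" for j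
  proof (cases "j < n")
    case True
    then show ?thesis
      using less that by simp
  next
    case False
    then have "g + 1 < g - n + j + 1"
      using less.prems that by auto
    then show ?thesis
      by (simp add: above)
  qed
  have "(\<Sum>j\<le>g. d j * x (g - n + j + 1))
      = d n * x (g - n + n + 1) + (\<Sum>j\<in>{..g} - {n}. d j * x (g - n + j + 1))"
    using less.prems by (subst sum.remove[of _ n]) auto
  also have "(\<Sum>j\<in>{..g} - {n}. d j * x (g - n + j + 1)) = 0"
    using off_diag by (rule sum.neutral[OF ballI])
  finally have "(\<Sum>j\<le>g. d j * x (g - n + j + 1)) = d n * x (g - n + n + 1)"
    by simp
  moreover have "g - n + n + 1 = g + 1"
    using less.prems by simp
  ultimately have "d n * x (g + 1) = 0"
    using eqs[of "g - n"] by simp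
  then show ?case
    using diag by simp
qed

lemma (in vector_space) independent_image_if_scalars_zero:
  assumes "finite K" and scalars_zero: "\<And>c. (\<Sum>k\<in>K. scale (c k) (u k)) = 0 \<Longrightarrow> \<forall>k\<in>K. c k = 0"
  shows "inj_on u K" "independent (u ` K)"
proof -
  show inj: "inj_on u K"
  proof (rule inj_onI, rule ccontr)
    fix k l assume "k \<in> K" "l \<in> K" "u k = u l" "k \<noteq> l"
    define c :: "_ \<Rightarrow> 'a" where "c x = (if x = k then 1 else if x = l then -1 else 0)" for x
    have "(\<Sum>x\<in>K. scale (c x) (u x)) = (\<Sum>x\<in>{k, l}. scale (c x) (u x))"
      using \<open>finite K\<close> \<open>k \<in> K\<close> \<open>l \<in> K\<close> by (intro sum.mono_neutral_right) (auto simp: c_def)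
    also have "\<dots> = 0"
      using \<open>u k = u l\<close> \<open>k \<noteq> l\<close> by (simp add: c_def)
    finally have "c k = 0"
      using scalars_zero \<open>k \<in> K\<close> by blast
    then show False
      by (simp add: c_def)
  qed
  show "independent (u ` K)"
  proof (rule independent_if_scalars_zero)
    show "finite (u ` K)"
      using \<open>finite K\<close> by simp
  next
    fix f y assume "(\<Sum>y\<in>u ` K. scale (f y) y) = 0" "y \<in> u ` K"
    then have "(\<Sum>k\<in>K. scale (f (u k)) (u k)) = 0"
      by (simp add: sum.reindex[OF inj])
    then have "\<forall>k\<in>K. f (u k) = 0"
      by (rule scalars_zero)
    then show "f y = 0"
      using \<open>y \<in> u ` K\<close> by blast
  qed
qed

lemma (in vector_space) span_subset_span_if_independent_card_ge:
  assumes "finite S" "independent B" "B \<subseteq> span S" "card S \<le> card B"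
  shows "span S \<subseteq> span B"
proof (rule span_minimal[OF subsetI subspace_span], rule ccontr)
  fix x assume "x \<in> S" "x \<notin> span B"
  have "independent (insert x B)"
    using \<open>x \<notin> span B\<close> assms(2) by (rule independent_insertI)
  moreover have "insert x B \<subseteq> span S"
    using \<open>x \<in> S\<close> assms(3) by (simp add: span_base)
  ultimately have "finite (insert x B) \<and> card (insert x B) \<le> card S"
    by (rule independent_span_bound[OF \<open>finite S\<close>])
  moreover have "x \<notin> B"
    using \<open>x \<notin> span B\<close> span_base by blast
  ultimately show False
    using assms(4) by (auto simp: card_insert_disjoint)
qed

lemma (in vector_space) subspace_eq_span_if_trivial_intersection:
  assumes "subspace R" "B \<subseteq> R" "R \<subseteq> span (B \<union> C)"
    and trivial: "\<And>x. x \<in> R \<Longrightarrow> x \<in> span C \<Longrightarrow> x = 0"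
  shows "R = span B"
proof
  show "span B \<subseteq> R"
    using assms(2,1) by (rule span_minimal)
  show "R \<subseteq> span B"
  proof
    fix r assume "r \<in> R"
    then have "r \<in> span (B \<union> C)"
      using assms(3) by blast
    then obtain b c where bc: "b \<in> span B" "c \<in> span C" "r = b + c"
      unfolding span_Un by blast
    have "r - b \<in> R"
      using subspace_diff[OF assms(1) \<open>r \<in> R\<close>] bc(1) \<open>span B \<subseteq> R\<close> by blast
    then have "c = 0"
      using trivial bc(2,3) by simp
    then show "r \<in> span B"
      using bc by simp
  qed
qed

subsection \<open>Two by two matrices\<close>

lemma mat2_mult_nth: "((P::mat2) ** Q) $ i $ j = P$i$1 * Q$1$j + P$i$2 * Q$2$j"
  by (simp add: matrix_matrix_mult_def sum_2)

lemma trace_mat2: "trace (M::mat2) = M$1$1 + M$2$2"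
  by (simp add: trace_def sum_2)

lemma mat2_eq_iff:
  "(M::mat2) = N \<longleftrightarrow> M$1$1 = N$1$1 \<and> M$1$2 = N$1$2 \<and> M$2$1 = N$2$1 \<and> M$2$2 = N$2$2"
  by (auto simp: vec_eq_iff forall_2)

lemma trace_mat2_mult:
  "trace ((P::mat2) ** Q) = P$1$1 * Q$1$1 + P$1$2 * Q$2$1 + P$2$1 * Q$1$2 + P$2$2 * Q$2$2"
  by (simp add: trace_mat2 mat2_mult_nth)

lemma trace_zero [simp]: "trace (0::mat2) = 0"
  by (simp add: trace_mat2)

lemma trace_sum: "trace (sum f A :: mat2) = (\<Sum>a\<in>A. trace (f a))"
  by (induct A rule: infinite_finite_induct) (auto simp: trace_add)

lemma trace_mult_sum_right: "trace ((U::mat2) ** sum f A) = (\<Sum>a\<in>A. trace (U ** f a))"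
  by (induct A rule: infinite_finite_induct) (auto simp: trace_add matrix_add_ldistrib)

lemma trace_mult_sum_left: "trace (sum f A ** (U::mat2)) = (\<Sum>a\<in>A. trace (f a ** U))"
  by (simp add: trace_mul_sym[of "sum f A"] trace_mul_sym[of _ U] trace_mult_sum_right)

definition Emat :: mat2 where
  "Emat = vector [vector [0, 1], vector [0, 0]]"

definition Hmat :: mat2 where
  "Hmat = vector [vector [1, 0], vector [0, -1]]"

lemma Amat_nth [simp]: "Amat$1$1 = 0" "Amat$1$2 = 0" "Amat$2$1 = 1" "Amat$2$2 = 0"
  by (simp_all add: Amat_def)

lemma Emat_nth [simp]: "Emat$1$1 = 0" "Emat$1$2 = 1" "Emat$2$1 = 0" "Emat$2$2 = 0"
  by (simp_all add: Emat_def)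

lemma Hmat_nth [simp]: "Hmat$1$1 = 1" "Hmat$1$2 = 0" "Hmat$2$1 = 0" "Hmat$2$2 = -1"
  by (simp_all add: Hmat_def)

lemma sl2_eq_if_trace_mult_eq:
  assumes "trace P = 0" "trace Q = 0"
    and "trace (P ** Emat) = trace (Q ** Emat)" "trace (P ** Amat) = trace (Q ** Amat)"
    and "trace (P ** Hmat) = trace (Q ** Hmat)"
  shows "P = Q"
proof -
  have "P$2$2 = - P$1$1" "Q$2$2 = - Q$1$1"
    using assms(1,2) by (simp_all add: trace_mat2 eq_neg_iff_add_eq_0 add.commute)
  moreover have "P$2$1 = Q$2$1" "P$1$2 = Q$1$2" "P$1$1 - P$2$2 = Q$1$1 - Q$2$2"
    using assms(3-5) by (simp_all add: trace_mat2_mult)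
  ultimately show ?thesis
    by (simp add: mat2_eq_iff)
qed

lemma commut_nth:
  "commut (P::mat2) Q $1$1 = P$1$2 * Q$2$1 - Q$1$2 * P$2$1"
  "commut P Q $1$2 = P$1$1 * Q$1$2 + P$1$2 * Q$2$2 - Q$1$1 * P$1$2 - Q$1$2 * P$2$2"
  "commut P Q $2$1 = P$2$1 * Q$1$1 + P$2$2 * Q$2$1 - Q$2$1 * P$1$1 - Q$2$2 * P$2$1"
  "commut P Q $2$2 = P$2$1 * Q$1$2 - Q$2$1 * P$1$2"
  by (simp_all add: commut_def mat2_mult_nth algebra_simps)

lemma commut_antisym: "commut Q P = - commut P Q"
  by (simp add: commut_def)

lemma commut_zero [simp]: "commut P 0 = 0" "commut 0 P = 0"
  by (simp_all add: commut_def)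

lemma commut_add_right: "commut P (Q + R) = commut P Q + commut P (R::mat2)"
  unfolding mat2_eq_iff by (simp add: commut_nth algebra_simps)

lemma trace_commut: "trace (commut P (Q::mat2)) = 0"
  by (simp add: commut_def trace_sub trace_mul_sym[of P])

lemma trace_mult_commut: "trace ((U::mat2) ** commut Y W) = - trace (commut Y U ** W)"
  unfolding trace_mat2_mult commut_nth by (simp add: algebra_simps)

lemma tscale_nth [simp]: "tscale c V i $ a $ b = c * V i $ a $ b"
  by (simp add: tscale_def)

lemma sum_tscale_nth: "(\<Sum>k\<in>K. tscale (c k) (u k)) i $ a $ b = (\<Sum>k\<in>K. c k * u k i $ a $ b)"
  by (simp add: sum_fun_apply)

interpretation tspace: vector_space tscale
  by unfold_locales (auto simp: tscale_def vec_eq_iff algebra_simps)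

lemma MA_subspace: "tspace.subspace (MA g)"
  unfolding tspace.subspace_def
  by (auto simp: MA_def sl2_def trace_mat2 tscale_def vec_eq_iff
      add.commute add.left_commute distrib_left[symmetric])

definition slot :: "nat \<Rightarrow> mat2 \<Rightarrow> tuple" where
  "slot j M = (\<lambda>i. if i = j then M else 0)"

lemma slot_nth: "slot j M i $ a $ b = (if i = j then M $ a $ b else 0)"
  by (simp add: slot_def)

lemma slot_in_MA: "i \<le> g \<Longrightarrow> M \<in> sl2 \<Longrightarrow> slot i M \<in> MA g"
  by (auto simp: MA_def slot_def sl2_def trace_mat2)

lemma pairing_slot: "i \<le> g \<Longrightarrow> pairing g U (slot i M) = trace (U i ** M)"
  by (simp add: pairing_def slot_def if_distrib[of "\<lambda>N. trace (U _ ** N)"] cong: if_cong)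

lemma pairing_add_right: "pairing g U (V + W) = pairing g U V + pairing g U W"
  by (simp add: pairing_def matrix_add_ldistrib trace_add sum.distrib)

lemma pairing_tscale_right: "pairing g U (tscale c V) = c * pairing g U V"
  unfolding pairing_def sum_distrib_left
  by (intro sum.cong refl) (simp add: trace_mat2_mult algebra_simps)

lemma pairing_zero_right [simp]: "pairing g U 0 = 0"
  by (simp add: pairing_def)

lemma MA_eq_if_pairing_eq:
  assumes "U \<in> MA g" "U' \<in> MA g" and pairing: "\<And>V. V \<in> MA g \<Longrightarrow> pairing g U V = pairing g U' V"
  shows "U = U'"
proof
  fix i
  show "U i = U' i"
  proof (cases "i \<le> g")
    case True
    have "trace (U i ** M) = trace (U' i ** M)" if "M \<in> sl2" for M
      using pairing[OF slot_in_MA[OF True that]] by (simp add: pairing_slot[OF True])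
    moreover have "Emat \<in> sl2" "Amat \<in> sl2" "Hmat \<in> sl2"
      by (simp_all add: sl2_def trace_mat2)
    ultimately show ?thesis
      using assms(1,2) True by (intro sl2_eq_if_trace_mult_eq) (auto simp: MA_def sl2_def)
  qed (use assms in \<open>simp add: MA_def\<close>)
qed

lemma Xc_Suc [simp]: "Xc g X (Suc g) = Amat"
  by (simp add: Xc_def)

lemma Xc_above: "g + 1 < a \<Longrightarrow> Xc g X a = 0"
  by (simp add: Xc_def)

lemma trace_Xc: "X \<in> MA g \<Longrightarrow> trace (Xc g X a) = 0"
  by (auto simp: Xc_def MA_def sl2_def trace_mat2)

subsection \<open>The Poisson tensor\<close>

lemma P0_eq_full_sum:
  assumes "i \<le> g"
  shows "P0 g X W i = (\<Sum>j\<le>g. commut (Xc g X (i + j + 1)) (W j))"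
proof -
  have "commut (Xc g X (i + j + 1)) (W j) = 0" if "j \<in> {..g} - {..g - i}" for j
  proof -
    have "g + 1 < i + j + 1"
      using that by auto
    then show ?thesis
      by (simp only: Xc_above commut_zero)
  qed
  then have "(\<Sum>j\<le>g - i. commut (Xc g X (i + j + 1)) (W j))
      = (\<Sum>j\<le>g. commut (Xc g X (i + j + 1)) (W j))"
    by (intro sum.mono_neutral_left) auto
  then show ?thesis
    using assms by (simp add: P0_def)
qed

lemma P0_slot:
  assumes "i \<le> g" "j \<le> g"
  shows "P0 g X (slot j M) i = commut (Xc g X (i + j + 1)) M"
proof -
  have "P0 g X (slot j M) i = (\<Sum>j'\<le>g. commut (Xc g X (i + j' + 1)) (slot j M j'))"
    using assms(1) by (rule P0_eq_full_sum)
  also have "\<dots> = (\<Sum>j'\<le>g. if j' = j then commut (Xc g X (i + j + 1)) M else 0)"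
    by (intro sum.cong) (auto simp: slot_def)
  finally show ?thesis
    using assms(2) by simp
qed

lemma P0_add: "P0 g X (V + W) = P0 g X V + P0 g X W"
  by (rule ext) (simp add: P0_def commut_add_right sum.distrib)

lemma P0_tscale: "P0 g X (tscale c W) = tscale c (P0 g X W)"
  by (rule ext) (auto simp: P0_def vec_eq_iff forall_2 commut_nth sum_distrib_left algebra_simps)

lemma P0_module_hom: "module_hom tscale tscale (P0 g X)"
  by unfold_locales (simp_all add: P0_add P0_tscale)

lemma P0_image_subspace: "tspace.subspace (P0 g X ` MA g)"
  by (rule module_hom.subspace_image[OF P0_module_hom MA_subspace])

lemma P0_in_MA: "P0 g X W \<in> MA g"
  by (auto simp: MA_def P0_def sl2_def trace_sum trace_commut)

lemma pairing_P0_skew: "pairing g U (P0 g X W) = - pairing g (P0 g X U) W"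
proof -
  have "pairing g U (P0 g X W)
      = (\<Sum>i\<le>g. \<Sum>j\<le>g. - trace (commut (Xc g X (i + j + 1)) (U i) ** W j))"
    unfolding pairing_def
    by (intro sum.cong refl) (simp add: P0_eq_full_sum trace_mult_sum_right trace_mult_commut)
  also have "\<dots> = (\<Sum>j\<le>g. \<Sum>i\<le>g. - trace (commut (Xc g X (i + j + 1)) (U i) ** W j))"
    by (rule sum.swap)
  also have "\<dots> = - pairing g (P0 g X U) W"
    unfolding pairing_def
    by (simp add: P0_eq_full_sum trace_mult_sum_left sum_negf add.commute add.left_commute)
  finally show ?thesis .
qed

subsection \<open>The Casimirs\<close>

definition casimir_grad :: "nat \<Rightarrow> tuple \<Rightarrow> nat \<Rightarrow> tuple" where
  "casimir_grad g X m = (\<lambda>j. if j \<le> g then Xc g X (m - j) else 0)"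

lemma casimir_grad_in_MA: "X \<in> MA g \<Longrightarrow> casimir_grad g X m \<in> MA g"
  by (auto simp: MA_def casimir_grad_def sl2_def trace_Xc)

lemma P0_casimir_grad:
  assumes "g + 1 \<le> m"
  shows "P0 g X (casimir_grad g X m) = (\<lambda>i. 0)"
proof
  fix i
  define k where "k = m - (g + 1)"
  define f where "f j = commut (Xc g X (i + j + 1)) (Xc g X (m - j))" for j
  show "P0 g X (casimir_grad g X m) i = 0"
  proof (cases "i \<le> g")
    case True
    have "P0 g X (casimir_grad g X m) i = (\<Sum>j\<le>g. f j)"
      using True by (simp add: P0_eq_full_sum casimir_grad_def f_def)
    also have "\<dots> = sum f {k..g - i}"
    proof (rule sum.mono_neutral_right)
      show "\<forall>j\<in>{..g} - {k..g - i}. f j = 0"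
      proof
        fix j assume "j \<in> {..g} - {k..g - i}"
        then have "g + 1 < i + j + 1 \<or> g + 1 < m - j"
          using assms by (auto simp: k_def)
        then show "f j = 0"
          unfolding f_def by (auto simp only: Xc_above commut_zero)
      qed
    qed auto
    also have "\<dots> = 0"
    proof (rule sum_reflect_antisym_eq_0)
      fix j assume "j \<in> {k..g - i}"
      then have "i + (g - i + k - j) + 1 = m - j" "m - (g - i + k - j) = i + j + 1"
        using assms True by (auto simp: k_def)
      then show "f (g - i + k - j) = - f j"
        unfolding f_def by (simp only:) (rule commut_antisym)
    qed
    finally show ?thesis .
  qed (simp add: P0_def)
qed

lemma Xc_perturb_nth:
  "V \<in> MA g \<Longrightarrow> Xc g (tadd X (tscale t V)) a $ r $ s = Xc g X a $ r $ s + t * V a $ r $ s"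
  by (simp add: Xc_def tadd_def MA_def)

lemma trace_mult_perturb:
  fixes p x v :: "nat \<Rightarrow> mat2"
  assumes "\<And>a r s. p a $ r $ s = x a $ r $ s + t * v a $ r $ s"
  shows "trace (p a ** p b) = trace (x a ** x b)
    + t * (trace (x a ** v b) + trace (v a ** x b)) + t\<^sup>2 * trace (v a ** v b)"
  unfolding trace_mat2_mult assms by (simp add: algebra_simps power2_eq_square)

lemma Hc_perturb:
  assumes "V \<in> MA g"
  shows "Hc g m (tadd X (tscale t V)) = Hc g m X
    + t * ((1/2) * (\<Sum>a\<le>g+1. \<Sum>b\<le>g+1.
        if a + b = m then trace (Xc g X a ** V b) + trace (V a ** Xc g X b) else 0))
    + t\<^sup>2 * ((1/2) * (\<Sum>a\<le>g+1. \<Sum>b\<le>g+1. if a + b = m then trace (V a ** V b) else 0))"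
proof -
  have split: "(if c then x + t * y + t\<^sup>2 * z else 0)
      = (if c then x else 0) + t * (if c then y else 0) + t\<^sup>2 * (if c then z else 0)"
    for c and x y z :: complex
    by simp
  show ?thesis
    unfolding Hc_def split trace_mult_perturb[where p="Xc g (tadd X (tscale t V))"
        and x="Xc g X" and v=V, OF Xc_perturb_nth[OF assms]]
      sum.distrib sum_distrib_left[symmetric]
    by (simp add: distrib_left mult.left_commute)
qed

lemma Hc_linear_term:
  assumes m: "g + 1 \<le> m" and V: "V \<in> MA g"
  shows "(1/2) * (\<Sum>a\<le>g+1. \<Sum>b\<le>g+1.
      if a + b = m then trace (Xc g X a ** V b) + trace (V a ** Xc g X b) else 0)
    = pairing g (casimir_grad g X m) V"
proof -
  let ?S = "\<lambda>F. \<Sum>a\<le>g+1. \<Sum>b\<le>g+1. if a + b = m then F a b else (0::complex)"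
  define S where "S = ?S (\<lambda>a b. trace (V a ** Xc g X b))"
  have "?S (\<lambda>a b. trace (Xc g X a ** V b))
      = (\<Sum>b\<le>g+1. \<Sum>a\<le>g+1. if a + b = m then trace (Xc g X a ** V b) else 0)"
    by (rule sum.swap)
  also have "\<dots> = S"
    unfolding S_def by (intro sum.cong refl) (simp add: add.commute trace_mul_sym[of "Xc g X _"])
  finally have "(\<Sum>a\<le>g+1. \<Sum>b\<le>g+1.
      if a + b = m then trace (Xc g X a ** V b) + trace (V a ** Xc g X b) else 0) = S + S"
    unfolding S_def if_distrib_add sum.distrib by (rule arg_cong)
  then have "(1/2) * (\<Sum>a\<le>g+1. \<Sum>b\<le>g+1.
      if a + b = m then trace (Xc g X a ** V b) + trace (V a ** Xc g X b) else 0) = S"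
    by simp
  also have "S = (\<Sum>a\<le>g+1. trace (V a ** Xc g X (m - a)))"
    unfolding S_def
  proof (rule sum.cong)
    fix a assume "a \<in> {..g+1}"
    then have "a \<le> m"
      using m by simp
    then have "(\<Sum>b\<le>g+1. if a + b = m then trace (V a ** Xc g X b) else 0)
        = (if m - a \<le> g + 1 then trace (V a ** Xc g X (m - a)) else 0)"
      by (rule sum_if_add_eq)
    also have "\<dots> = trace (V a ** Xc g X (m - a))"
      by (simp add: Xc_above)
    finally show "(\<Sum>b\<le>g+1. if a + b = m then trace (V a ** Xc g X b) else 0)
        = trace (V a ** Xc g X (m - a))" .
  qed simp
  also have "\<dots> = (\<Sum>a\<le>g. trace (V a ** Xc g X (m - a)))"
    using V by (simp add: MA_def)
  also have "\<dots> = pairing g (casimir_grad g X m) V"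
    by (simp add: pairing_def casimir_grad_def trace_mul_sym[of "V _"])
  finally show ?thesis .
qed

lemma is_grad_casimir_grad:
  assumes "X \<in> MA g" "g + 1 \<le> m"
  shows "is_grad g (Hc g m) X (casimir_grad g X m)"
  unfolding is_grad_def
proof (intro conjI ballI)
  show "casimir_grad g X m \<in> MA g"
    using assms(1) by (rule casimir_grad_in_MA)
  fix V assume "V \<in> MA g"
  then show "((\<lambda>t. Hc g m (tadd X (tscale t V))) has_field_derivative
      pairing g (casimir_grad g X m) V) (at 0)"
    unfolding Hc_perturb[OF \<open>V \<in> MA g\<close>] Hc_linear_term[OF assms(2) \<open>V \<in> MA g\<close>]
    by (auto intro!: derivative_eq_intros)
qed

lemma is_grad_unique:
  assumes "is_grad g F X W" "is_grad g F X W'"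
  shows "W = W'"
proof (rule MA_eq_if_pairing_eq)
  show "W \<in> MA g" "W' \<in> MA g"
    using assms by (simp_all add: is_grad_def)
  show "pairing g W V = pairing g W' V" if "V \<in> MA g" for V
    using assms that unfolding is_grad_def by (meson DERIV_unique)
qed

lemma is_grad_Hc_iff:
  assumes "X \<in> MA g" "g + 1 \<le> m"
  shows "is_grad g (Hc g m) X W \<longleftrightarrow> W = casimir_grad g X m"
  using is_grad_unique is_grad_casimir_grad[OF assms] by blast

lemma casimir_grads_independent:
  assumes "(\<lambda>i. \<Sum>m\<in>{g+1..2*g+1}. tscale (c m) (casimir_grad g X m) i) = (\<lambda>i. 0)"
  shows "\<forall>m\<in>{g+1..2*g+1}. c m = 0"
proof -
  let ?x = "\<lambda>n. Xc g X n $ 2 $ 1"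
  have "(\<Sum>j\<le>g. c (g + 1 + j) * ?x (i + j + 1)) = 0" if "i \<le> g" for i
  proof -
    have "(\<Sum>m\<in>{g+1..2*g+1}. tscale (c m) (casimir_grad g X m) (g - i)) $ 2 $ 1 = 0"
      using fun_cong[OF assms, of "g - i"] by simp
    then have "(\<Sum>m\<in>{g+1..2*g+1}. c m * ?x (m - (g - i))) = 0"
      by (simp add: casimir_grad_def del: sum.cl_ivl_Suc)
    moreover have "(\<Sum>m\<in>{g+1..2*g+1}. c m * ?x (m - (g - i)))
        = (\<Sum>j\<le>g. c (g + 1 + j) * ?x (i + j + 1))"
    proof (rule sum.reindex_bij_witness[where i="\<lambda>j. g + 1 + j" and j="\<lambda>m. m - (g + 1)"])
      fix m assume m: "m \<in> {g+1..2*g+1}"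
      then have "g + 1 + (m - (g + 1)) = m" "i + (m - (g + 1)) + 1 = m - (g - i)"
        using \<open>i \<le> g\<close> by auto
      then show "c (g + 1 + (m - (g + 1))) * ?x (i + (m - (g + 1)) + 1) = c m * ?x (m - (g - i))"
        by (simp only:)
    qed auto
    ultimately show ?thesis
      by simp
  qed
  then have c0: "c (g + 1 + j) = 0" if "j \<le> g" for j
    using that by (intro toeplitz_triangular_eq_0[where x="?x" and d="\<lambda>j. c (g + 1 + j)"])
      (simp_all add: Xc_above)
  show ?thesis
  proof
    fix m assume "m \<in> {g+1..2*g+1}"
    then have "g + 1 + (m - (g + 1)) = m" "m - (g + 1) \<le> g"
      by auto
    then show "c m = 0"
      using c0 by metis
  qed
qed

subsection \<open>The rank of the Poisson tensor\<close>

definition level_tangent :: "nat \<Rightarrow> tuple \<Rightarrow> tuple set" where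
  "level_tangent g X = {V \<in> MA g. \<forall>m\<in>{g+1..2*g+1}. pairing g (casimir_grad g X m) V = 0}"

lemma level_tangent_subspace: "tspace.subspace (level_tangent g X)"
  using MA_subspace[of g] unfolding tspace.subspace_def level_tangent_def
  by (auto simp: pairing_add_right pairing_tscale_right)

lemma P0_in_level_tangent: "P0 g X W \<in> level_tangent g X"
proof -
  have "pairing g (casimir_grad g X m) (P0 g X W) = 0" if "g + 1 \<le> m" for m
    unfolding pairing_P0_skew P0_casimir_grad[OF that] by (simp add: pairing_def)
  then show ?thesis
    by (simp add: level_tangent_def P0_in_MA)
qed

lemma pairing_casimir_grad_upper:
  assumes "\<And>i. V i $1$1 = 0" "\<And>i. V i $2$1 = 0" "\<And>i. V i $2$2 = 0"
  shows "pairing g (casimir_grad g X (g + 1 + k)) V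
    = (\<Sum>j\<le>g. V (g - j) $1$2 * Xc g X (k + j + 1) $2$1)"
proof -
  have "pairing g (casimir_grad g X (g + 1 + k)) V
      = (\<Sum>i\<le>g. Xc g X (g + 1 + k - i) $2$1 * V i $1$2)"
    unfolding pairing_def
    by (intro sum.cong refl) (simp add: casimir_grad_def trace_mat2_mult assms)
  also have "\<dots> = (\<Sum>j\<le>g. V (g - j) $1$2 * Xc g X (k + j + 1) $2$1)"
  proof (rule sym, rule sum.reindex_bij_witness[where i="\<lambda>i. g - i" and j="\<lambda>i. g - i"])
    fix j assume "j \<in> {..g}"
    then have "g + 1 + k - (g - j) = k + j + 1"
      by auto
    then show "Xc g X (g + 1 + k - (g - j)) $2$1 * V (g - j) $1$2
        = V (g - j) $1$2 * Xc g X (k + j + 1) $2$1"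
      by (simp only: mult.commute)
  qed auto
  finally show ?thesis .
qed

lemma level_tangent_upper_eq_0:
  assumes V: "V \<in> level_tangent g X" and lower: "\<And>i. V i $1$1 = 0" "\<And>i. V i $2$1 = 0"
  shows "V = 0"
proof -
  have "V \<in> MA g"
    using V by (simp add: level_tangent_def)
  then have diag: "V i $2$2 = 0" for i
    using lower(1)[of i] by (cases "i \<le> g") (auto simp: MA_def sl2_def trace_mat2)
  have "(\<Sum>j\<le>g. V (g - j) $1$2 * Xc g X (k + j + 1) $2$1) = 0" if "k \<le> g" for k
  proof -
    have "pairing g (casimir_grad g X (g + 1 + k)) V = 0"
      using V that by (simp add: level_tangent_def)
    then show ?thesis
      by (simp only: pairing_casimir_grad_upper[OF lower diag])
  qed
  then have "V (g - j) $1$2 = 0" if "j \<le> g" for j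
    using that
    by (intro toeplitz_triangular_eq_0[where x="\<lambda>n. Xc g X n $2$1" and d="\<lambda>j. V (g - j) $1$2"])
      (simp_all add: Xc_above)
  then have upper: "V i $1$2 = 0" if "i \<le> g" for i
    using that by (metis diff_diff_cancel diff_le_self)
  show ?thesis
  proof
    fix i
    show "V i = 0 i"
    proof (cases "i \<le> g")
      case True
      then show ?thesis
        using upper diag lower by (simp add: mat2_eq_iff)
    qed (use \<open>V \<in> MA g\<close> in \<open>simp add: MA_def\<close>)
  qed
qed

fun adapted_basis :: "nat \<Rightarrow> tuple \<Rightarrow> nat \<times> nat \<Rightarrow> tuple" where
  "adapted_basis g X (j, s) =
    (if s = 0 then P0 g X (slot j Hmat) else if s = 1 then P0 g X (slot j Emat) else slot j Emat)"

text \<open>The \<open>(2,1)\<close>- and \<open>(1,1)\<close>-entries give triangular Toeplitz systems for the coefficients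
  of the \<open>H\<close>- and \<open>E\<close>-images, with diagonal \<open>Amat $2$1 = 1\<close>; the \<open>(1,2)\<close>-entries then
  isolate the remaining coefficients.\<close>
lemma adapted_basis_scalars_zero:
  assumes "(\<Sum>k\<in>{..g}\<times>{0,1,2}. tscale (c k) (adapted_basis g X k)) = 0"
  shows "\<forall>k\<in>{..g}\<times>{0,1,2}. c k = 0"
proof -
  let ?u = "adapted_basis g X" and ?x = "\<lambda>n. Xc g X n $ 2 $ 1"
  have entries: "(\<Sum>j\<le>g. c (j,0) * ?u (j,0) i $ a $ b + c (j,1) * ?u (j,1) i $ a $ b
      + c (j,2) * ?u (j,2) i $ a $ b) = 0" for i a b
    using arg_cong[OF assms, of "\<lambda>V. V i $ a $ b"]
    by (simp only: sum_tscale_nth zero_fun_apply zero_index) (simp only: sum_product_012)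
  have "(\<Sum>j\<le>g. (2 * c (j,0)) * ?x (i + j + 1)) = 0" if "i \<le> g" for i
  proof -
    have "(\<Sum>j\<le>g. (2 * c (j,0)) * ?x (i + j + 1)) = (\<Sum>j\<le>g. c (j,0) * ?u (j,0) i $2$1
        + c (j,1) * ?u (j,1) i $2$1 + c (j,2) * ?u (j,2) i $2$1)"
      using that by (intro sum.cong refl) (simp add: P0_slot commut_nth slot_nth algebra_simps)
    then show ?thesis
      using entries by simp
  qed
  then have H: "c (j,0) = 0" if "j \<le> g" for j
    using toeplitz_triangular_eq_0[where x="?x" and d="\<lambda>j. 2 * c (j,0)", OF _ _ _ that]
    by (simp add: Xc_above)
  have "(\<Sum>j\<le>g. (- c (j,1)) * ?x (i + j + 1)) = 0" if "i \<le> g" for i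
  proof -
    have "(\<Sum>j\<le>g. (- c (j,1)) * ?x (i + j + 1)) = (\<Sum>j\<le>g. c (j,0) * ?u (j,0) i $1$1
        + c (j,1) * ?u (j,1) i $1$1 + c (j,2) * ?u (j,2) i $1$1)"
      using that by (intro sum.cong refl) (simp add: P0_slot commut_nth slot_nth algebra_simps)
    then show ?thesis
      using entries by simp
  qed
  then have E: "c (j,1) = 0" if "j \<le> g" for j
    using toeplitz_triangular_eq_0[where x="?x" and d="\<lambda>j. - c (j,1)", OF _ _ _ that]
    by (simp add: Xc_above)
  have "c (i,2) = 0" if "i \<le> g" for i
  proof -
    have "(\<Sum>j\<le>g. if j = i then c (j,2) else 0) = (\<Sum>j\<le>g. c (j,0) * ?u (j,0) i $1$2
        + c (j,1) * ?u (j,1) i $1$2 + c (j,2) * ?u (j,2) i $1$2)"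
      by (intro sum.cong refl) (simp add: H E E[simplified] slot_nth)
    then show ?thesis
      using entries that by simp
  qed
  with H E show ?thesis
    by auto
qed

lemma adapted_basis_independent:
  "inj_on (adapted_basis g X) ({..g}\<times>{0,1,2})"
  "tspace.independent (adapted_basis g X ` ({..g}\<times>{0,1,2}))"
  using tspace.independent_image_if_scalars_zero[OF _ adapted_basis_scalars_zero] by auto

lemma adapted_basis_in_MA: "adapted_basis g X k \<in> MA g" if "fst k \<le> g"
  using that by (cases k) (auto simp: P0_in_MA intro!: slot_in_MA simp: sl2_def trace_mat2)

fun std_basis :: "nat \<times> nat \<Rightarrow> tuple" where
  "std_basis (j, s) = slot j (if s = 0 then Hmat else if s = 1 then Emat else Amat)"

lemma MA_subset_span_std_basis: "MA g \<subseteq> tspace.span (std_basis ` ({..g}\<times>{0,1,2}))"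
proof
  fix V assume V: "V \<in> MA g"
  define c where
    "c = (\<lambda>(j, s). if s = 0 then V j $1$1 else if s = (1::nat) then V j $1$2 else V j $2$1)"
  have "V i $ a $ b = (\<Sum>k\<in>{..g}\<times>{0,1,2}. tscale (c k) (std_basis k)) i $ a $ b" for i a b
  proof -
    have "(\<Sum>k\<in>{..g}\<times>{0,1,2}. tscale (c k) (std_basis k)) i $ a $ b
        = (\<Sum>j\<le>g. if j = i then V i $1$1 * Hmat $a$b + V i $1$2 * Emat $a$b + V i $2$1 * Amat $a$b
            else 0)"
      unfolding sum_tscale_nth unfolding sum_product_012
      by (intro sum.cong refl) (auto simp: c_def slot_nth)
    also have "\<dots> = V i $ a $ b"
    proof (cases "i \<le> g")
      case True
      then have "V i $2$2 = - V i $1$1"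
        using V by (auto simp: MA_def sl2_def trace_mat2 eq_neg_iff_add_eq_0 add.commute)
      with True show ?thesis
        using exhaust_2[of a] exhaust_2[of b] by (elim disjE) simp_all
    qed (use V in \<open>simp add: MA_def\<close>)
    finally show ?thesis ..
  qed
  then have "V = (\<Sum>k\<in>{..g}\<times>{0,1,2}. tscale (c k) (std_basis k))"
    by (simp add: fun_eq_iff vec_eq_iff)
  also have "\<dots> \<in> tspace.span (std_basis ` ({..g}\<times>{0,1,2}))"
    by (intro tspace.span_sum tspace.span_scale tspace.span_base imageI)
  finally show "V \<in> tspace.span (std_basis ` ({..g}\<times>{0,1,2}))" .
qed

lemma span_std_basis_subset_span_adapted_basis:
  "tspace.span (std_basis ` ({..g}\<times>{0,1,2})) \<subseteq> tspace.span (adapted_basis g X ` ({..g}\<times>{0,1,2}))"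
proof (rule tspace.span_subset_span_if_independent_card_ge)
  let ?u = "adapted_basis g X" and ?K = "{..g}\<times>{0,1,2::nat}"
  have "?u ` ?K \<subseteq> MA g"
    by (auto intro: adapted_basis_in_MA)
  then show "?u ` ?K \<subseteq> tspace.span (std_basis ` ?K)"
    using MA_subset_span_std_basis by blast
  have "card (std_basis ` ?K) \<le> card ?K"
    by (rule card_image_le) simp
  also have "card ?K = card (?u ` ?K)"
    by (rule card_image[OF adapted_basis_independent(1), symmetric])
  finally show "card (std_basis ` ?K) \<le> card (?u ` ?K)" .
  show "tspace.independent (?u ` ?K)"
    by (rule adapted_basis_independent(2))
qed simp

lemma level_tangent_eq_span_adapted_basis:
  "level_tangent g X = tspace.span (adapted_basis g X ` ({..g}\<times>{0,1}))"
proof (rule tspace.subspace_eq_span_if_trivial_intersection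
    [where C="adapted_basis g X ` ({..g}\<times>{2})"])
  let ?u = "adapted_basis g X"
  show "tspace.subspace (level_tangent g X)"
    by (rule level_tangent_subspace)
  show "?u ` ({..g}\<times>{0,1}) \<subseteq> level_tangent g X"
    by (auto simp: P0_in_level_tangent)
  have "level_tangent g X \<subseteq> MA g"
    by (auto simp: level_tangent_def)
  also have "\<dots> \<subseteq> tspace.span (std_basis ` ({..g}\<times>{0,1,2}))"
    by (rule MA_subset_span_std_basis)
  also have "\<dots> \<subseteq> tspace.span (?u ` ({..g}\<times>{0,1,2}))"
    by (rule span_std_basis_subset_span_adapted_basis)
  also have "?u ` ({..g}\<times>{0,1,2}) = ?u ` ({..g}\<times>{0,1}) \<union> ?u ` ({..g}\<times>{2})"
    by auto
  finally show "level_tangent g X \<subseteq> tspace.span (?u ` ({..g}\<times>{0,1}) \<union> ?u ` ({..g}\<times>{2}))" .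
  have "tspace.subspace {V. \<forall>i. V i $1$1 = 0 \<and> V i $2$1 = 0}"
    by (simp add: tspace.subspace_def)
  then have "tspace.span (?u ` ({..g}\<times>{2})) \<subseteq> {V. \<forall>i. V i $1$1 = 0 \<and> V i $2$1 = 0}"
    by (intro tspace.span_minimal) (auto simp: slot_nth)
  then show "V = 0" if "V \<in> level_tangent g X" "V \<in> tspace.span (?u ` ({..g}\<times>{2}))" for V
    using level_tangent_upper_eq_0 that by blast
qed

lemma P0_image_eq_level_tangent: "P0 g X ` MA g = level_tangent g X"
proof
  show "P0 g X ` MA g \<subseteq> level_tangent g X"
    using P0_in_level_tangent by blast
  have "adapted_basis g X ` ({..g}\<times>{0,1}) \<subseteq> P0 g X ` MA g"
    by (auto intro!: imageI slot_in_MA simp: sl2_def trace_mat2)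
  then show "level_tangent g X \<subseteq> P0 g X ` MA g"
    unfolding level_tangent_eq_span_adapted_basis
    using P0_image_subspace by (rule tspace.span_minimal)
qed

lemma dim_P0_image: "tspace.dim (P0 g X ` MA g) = 2 * (g + 1)"
proof -
  have sub: "{..g}\<times>{0,1} \<subseteq> {..g}\<times>{0,1,2::nat}"
    by auto
  have "tspace.dim (P0 g X ` MA g) = card (adapted_basis g X ` ({..g}\<times>{0,1}))"
    unfolding P0_image_eq_level_tangent level_tangent_eq_span_adapted_basis
    by (rule tspace.dim_span_eq_card_independent)
      (rule tspace.independent_mono[OF adapted_basis_independent(2) image_mono[OF sub]])
  also have "\<dots> = card ({..g}\<times>{0,1::nat})"
    by (rule card_image[OF inj_on_subset[OF adapted_basis_independent(1) sub]])
  finally show ?thesis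
    by (simp add: card_cartesian_product)
qed

theorem mainTheorem3:
  fixes g :: nat
  assumes "g \<ge> 1"
  shows
    \<comment> \<open>symplectic leaves have dimension 2(g+1): rank of P_0 is 2(g+1) at every point\<close>
    "(\<forall>X\<in>MA g. vector_space.dim tscale (P0 g X ` MA g) = 2 * (g + 1))
     \<comment> \<open>H_{g+1},...,H_{2g+1} are Casimirs\<close>
   \<and> (\<forall>m\<in>{g+1..2*g+1}. \<forall>X\<in>MA g.
        (\<exists>W. is_grad g (Hc g m) X W) \<and> (\<forall>W. is_grad g (Hc g m) X W \<longrightarrow> P0 g X W = (\<lambda>i. 0)))
     \<comment> \<open>functional independence: differentials linearly independent at every point\<close>
   \<and> (\<forall>X\<in>MA g. \<forall>dH. (\<forall>m\<in>{g+1..2*g+1}. is_grad g (Hc g m) X (dH m)) \<longrightarrow>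
        (\<forall>c::nat \<Rightarrow> complex. (\<lambda>i. \<Sum>m\<in>{g+1..2*g+1}. tscale (c m) (dH m) i) = (\<lambda>i. 0)
           \<longrightarrow> (\<forall>m\<in>{g+1..2*g+1}. c m = 0)))
     \<comment> \<open>leaves = level sets: tangent space of the leaf equals tangent space of the common level set\<close>
   \<and> (\<forall>X\<in>MA g. \<forall>dH. (\<forall>m\<in>{g+1..2*g+1}. is_grad g (Hc g m) X (dH m)) \<longrightarrow>
        P0 g X ` MA g = {V\<in>MA g. \<forall>m\<in>{g+1..2*g+1}. pairing g (dH m) V = 0})"
proof (intro conjI ballI allI impI)
  show "tspace.dim (P0 g X ` MA g) = 2 * (g + 1)" for X
    by (rule dim_P0_image)
  show "\<exists>W. is_grad g (Hc g m) X W" if "m \<in> {g+1..2*g+1}" "X \<in> MA g" for m X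
    using that is_grad_casimir_grad by auto
  show "P0 g X W = (\<lambda>i. 0)"
    if "m \<in> {g+1..2*g+1}" "X \<in> MA g" "is_grad g (Hc g m) X W" for m X W
    using that by (simp add: is_grad_Hc_iff P0_casimir_grad)
  fix X dH
  assume "X \<in> MA g" "\<forall>m\<in>{g+1..2*g+1}. is_grad g (Hc g m) X (dH m)"
  then have dH: "dH m = casimir_grad g X m" if "m \<in> {g+1..2*g+1}" for m
    using that is_grad_Hc_iff by simp
  show "c m = 0" if "(\<lambda>i. \<Sum>m\<in>{g+1..2*g+1}. tscale (c m) (dH m) i) = (\<lambda>i. 0)"
    and "m \<in> {g+1..2*g+1}" for c m
    using that casimir_grads_independent[of c g X] by (simp add: dH del: sum.cl_ivl_Suc)
  show "P0 g X ` MA g = {V\<in>MA g. \<forall>m\<in>{g+1..2*g+1}. pairing g (dH m) V = 0}"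
    by (simp add: P0_image_eq_level_tangent level_tangent_def dH)
qed

end
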